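(* Let $d\ge 1$ and $n\ge 0$ be integers, let $N:=\dim \mathbb{C}_n[z]$, where $\mathbb{C}_n[z]$ denotes the space of polynomials in $d$ complex variables of total degree at most $n$, and let $A=\{x_1,\dots,x_N\}\subset\mathbb{C}^d$ be a set of $N$ distinct points that is unisolvent for polynomial interpolation, i.e. for all $y_1,\dots,y_N\in\mathbb{C}$ there is a unique $p\in\mathbb{C}_n[z]$ with $p(x_i)=y_i$ for $1\le i\le N$. Let $z_0\in\mathbb{C}^d\setminus A$, and let $\ell_1,\dots,\ell_N\in\mathbb{C}_n[z]$ be the fundamental Lagrange interpolating polynomials for these points ($\ell_i(x_j)=\delta_{ij}$). Then among all discrete probability measures supported at the points $x_1,\dots,x_N$, the measure $\mu=\sum_{i=1}^N w_i\delta_{x_i}$ with \[ w_i:=\frac{|\ell_i(z_0)|}{\sum_{j=1}^N|\ell_j(z_0)|},\qquad 1\le i\le N, \] minimizes $K_n^\mu(z_0,z_0)$.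
   Context: For a probability measure $\mu$ that is non-degenerate on $\mathbb{C}_n[z]$ (i.e. $\int|p|^2\,d\mu>0$ for every nonzero $p\in\mathbb{C}_n[z]$), $K_n^\mu(z,z):=\sum_{k=1}^N|q_k(z)|^2$, where $\{q_1,\dots,q_N\}$ is a $\mu$-orthonormal basis of $\mathbb{C}_n[z]$ (the reciprocal of the Christoffel function, or Bergman kernel, of $\mu$ on the diagonal). *)

theory Defs
  imports "HOL-Probability.Probability"
begin

text \<open>Points of C^d are vectors of type complex ^ 'd (d = CARD('d) >= 1).
  Multi-indices are functions 'd => nat; a polynomial of total degree <= n is
  represented by its polynomial function.\<close>

definition monomial :: "('d::finite \<Rightarrow> nat) \<Rightarrow> complex ^ 'd \<Rightarrow> complex" where
  "monomial \<alpha> z = (\<Prod>i\<in>UNIV. (z $ i) ^ (\<alpha> i))"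

definition multi_indices :: "nat \<Rightarrow> ('d::finite \<Rightarrow> nat) set" where
  "multi_indices n = {\<alpha>. sum \<alpha> UNIV \<le> n}"

definition polys :: "nat \<Rightarrow> (complex ^ 'd::finite \<Rightarrow> complex) set" where
  "polys n = {p. \<exists>c :: ('d \<Rightarrow> nat) \<Rightarrow> complex.
                   p = (\<lambda>z. \<Sum>\<alpha>\<in>multi_indices n. c \<alpha> * monomial \<alpha> z)}"

definition dimP :: "'d::finite itself \<Rightarrow> nat \<Rightarrow> nat" where
  "dimP _ n = card (multi_indices n :: ('d \<Rightarrow> nat) set)"

definition ip :: "(complex ^ 'd::finite) measure \<Rightarrow> (complex ^ 'd \<Rightarrow> complex)
                   \<Rightarrow> (complex ^ 'd \<Rightarrow> complex) \<Rightarrow> complex" where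
  "ip M p q = (LINT z|M. p z * cnj (q z))"

definition nondegenerate :: "(complex ^ 'd::finite) measure \<Rightarrow> nat \<Rightarrow> bool" where
  "nondegenerate M n \<longleftrightarrow>
     (\<forall>p \<in> polys n. p \<noteq> (\<lambda>_. 0) \<longrightarrow> (LINT z|M. (cmod (p z))\<^sup>2) > 0)"

text \<open>q_1..q_N (indexed 0..N-1) is an M-orthonormal basis of C_n[z].\<close>
definition is_onb :: "(complex ^ 'd::finite) measure \<Rightarrow> nat
                      \<Rightarrow> (nat \<Rightarrow> complex ^ 'd \<Rightarrow> complex) \<Rightarrow> bool" where
  "is_onb M n q \<longleftrightarrow>
     (\<forall>k < dimP TYPE('d) n. q k \<in> polys n) \<and>
     (\<forall>k < dimP TYPE('d) n. \<forall>l < dimP TYPE('d) n. ip M (q k) (q l) = (if k = l then 1 else 0)) \<and>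
     (\<forall>p \<in> polys n. \<exists>c. p = (\<lambda>z. \<Sum>k < dimP TYPE('d) n. c k * q k z))"

text \<open>K_n^mu(z,z) = sum_k |q_k(z)|^2 for a mu-orthonormal basis (meaningful for
  non-degenerate mu; independent of the choice of basis).\<close>
definition Kn :: "(complex ^ 'd::finite) measure \<Rightarrow> nat \<Rightarrow> complex ^ 'd \<Rightarrow> real" where
  "Kn M n z = (let q = (SOME q. is_onb M n q) in \<Sum>k < dimP TYPE('d) n. (cmod (q k z))\<^sup>2)"

end

theory Submission
  imports Defs
begin

text \<open>If \<open>\<nu>\<close> puts positive weights \<open>v\<^sub>i\<close> on the nodes, the functions \<open>\<ell>\<^sub>i / sqrt v\<^sub>i\<close> form a
  \<open>\<nu>\<close>-orthonormal basis, so \<open>K\<^sub>n\<^sup>\<nu>(z,z) = \<Sum>\<^sub>i |\<ell>\<^sub>i(z)|\<^sup>2 / v\<^sub>i\<close>; that this does not depend on the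
  chosen basis follows from Parseval's identity applied to the reproducing kernel
  \<open>\<Sum>\<^sub>i cnj(\<ell>\<^sub>i(z)) / v\<^sub>i \<cdot> \<ell>\<^sub>i\<close>. By Cauchy-Schwarz, \<open>\<Sum>\<^sub>i a\<^sub>i\<^sup>2 / v\<^sub>i \<ge> (\<Sum>\<^sub>i a\<^sub>i)\<^sup>2\<close> whenever \<open>\<Sum>\<^sub>i v\<^sub>i = 1\<close>,
  with equality for \<open>v\<^sub>i\<close> proportional to \<open>a\<^sub>i = |\<ell>\<^sub>i(z\<^sub>0)|\<close>.\<close>

lemma finite_multi_indices: "finite (multi_indices n :: ('d::finite \<Rightarrow> nat) set)"
proof (rule finite_subset)
  show "multi_indices n \<subseteq> (Pi\<^sub>E (UNIV::'d set) (\<lambda>_. {..n}))"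
  proof
    fix \<alpha> :: "'d \<Rightarrow> nat"
    assume "\<alpha> \<in> multi_indices n"
    then have "\<alpha> i \<le> n" for i
      using member_le_sum[of i UNIV \<alpha>] by (simp add: multi_indices_def)
    then show "\<alpha> \<in> Pi\<^sub>E UNIV (\<lambda>_. {..n})"
      by (simp add: PiE_UNIV_domain)
  qed
  show "finite (Pi\<^sub>E (UNIV::'d set) (\<lambda>_. {..n}))"
    by (rule finite_PiE) auto
qed

lemma polys_sum:
  assumes "finite I" "\<And>i. i \<in> I \<Longrightarrow> f i \<in> polys n"
  shows "(\<lambda>z. \<Sum>i\<in>I. c i * f i z) \<in> polys n"
proof -
  have "\<forall>i\<in>I. \<exists>cf. f i = (\<lambda>z. \<Sum>\<alpha>\<in>multi_indices n. cf \<alpha> * monomial \<alpha> z)"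
    using assms(2) by (simp add: polys_def)
  then obtain cf where cf: "\<And>i. i \<in> I \<Longrightarrow> f i = (\<lambda>z. \<Sum>\<alpha>\<in>multi_indices n. cf i \<alpha> * monomial \<alpha> z)"
    by metis
  have "(\<Sum>i\<in>I. c i * f i z) = (\<Sum>\<alpha>\<in>multi_indices n. (\<Sum>i\<in>I. c i * cf i \<alpha>) * monomial \<alpha> z)"
    for z
  proof -
    have "(\<Sum>i\<in>I. c i * f i z) = (\<Sum>i\<in>I. \<Sum>\<alpha>\<in>multi_indices n. c i * cf i \<alpha> * monomial \<alpha> z)"
      using cf by (simp add: sum_distrib_left mult.assoc)
    also have "\<dots> = (\<Sum>\<alpha>\<in>multi_indices n. (\<Sum>i\<in>I. c i * cf i \<alpha>) * monomial \<alpha> z)"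
      by (subst sum.swap) (simp add: sum_distrib_right)
    finally show ?thesis .
  qed
  then show ?thesis
    unfolding polys_def mem_Collect_eq by (intro exI[of _ "\<lambda>\<alpha>. \<Sum>i\<in>I. c i * cf i \<alpha>"]) auto
qed

lemma const_one_in_polys: "(\<lambda>_. 1) \<in> (polys n :: (complex ^ 'd::finite \<Rightarrow> complex) set)"
proof -
  let ?c = "\<lambda>\<alpha>. if \<alpha> = (\<lambda>_. 0) then 1 else 0"
  have zero_multi_index: "(\<lambda>_. 0) \<in> (multi_indices n :: ('d \<Rightarrow> nat) set)"
    by (simp add: multi_indices_def)
  have "(\<Sum>\<alpha>\<in>multi_indices n. ?c \<alpha> * monomial \<alpha> z) = 1" for z :: "complex ^ 'd"
  proof -
    have "(\<Sum>\<alpha>\<in>multi_indices n. ?c \<alpha> * monomial \<alpha> z)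
        = (\<Sum>\<alpha>\<in>multi_indices n. if \<alpha> = (\<lambda>_. 0) then monomial \<alpha> z else 0)"
      by (rule sum.cong) simp_all
    also have "\<dots> = monomial (\<lambda>_. 0) z"
      using zero_multi_index by (simp add: finite_multi_indices)
    also have "\<dots> = 1"
      by (simp add: monomial_def)
    finally show ?thesis .
  qed
  then show ?thesis
    unfolding polys_def mem_Collect_eq by (intro exI[of _ ?c]) simp
qed

lemma polys_scale:
  assumes "p \<in> polys n"
  shows "(\<lambda>z. c * p z) \<in> polys n"
  using polys_sum[of "{()}" "\<lambda>_. p" n "\<lambda>_. c"] assms by simp

lemma set_pmf_subset_iff_sum_pmf_eq_1:
  assumes "finite A"
  shows "set_pmf p \<subseteq> A \<longleftrightarrow> (\<Sum>a\<in>A. pmf p a) = 1"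
proof
  assume "(\<Sum>a\<in>A. pmf p a) = 1"
  then have "measure_pmf.prob p A = 1"
    using assms by (simp add: measure_measure_pmf_finite)
  then have "AE a in measure_pmf p. a \<in> A"
    by (simp add: measure_pmf.prob_eq_1)
  then show "set_pmf p \<subseteq> A"
    by (auto simp: AE_measure_pmf_iff)
qed (use assms sum_pmf_eq_1 in blast)

lemma integral_measure_pmf_inj_image:
  fixes f :: "'a \<Rightarrow> 'b::{banach, second_countable_topology}"
  assumes "finite I" "inj_on x I" "set_pmf \<nu> \<subseteq> x ` I"
  shows "(LINT z|measure_pmf \<nu>. f z) = (\<Sum>i\<in>I. pmf \<nu> (x i) *\<^sub>R f (x i))"
proof -
  have "(LINT z|measure_pmf \<nu>. f z) = (\<Sum>a\<in>x ` I. pmf \<nu> a *\<^sub>R f a)"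
    using assms by (intro integral_measure_pmf) auto
  also have "\<dots> = (\<Sum>i\<in>I. pmf \<nu> (x i) *\<^sub>R f (x i))"
    using assms(2) by (simp add: sum.reindex)
  finally show ?thesis .
qed

lemma ip_commute: "ip M q p = cnj (ip M p q)"
  unfolding ip_def by (subst Bochner_Integration.integral_cnj[symmetric]) (simp add: mult.commute)

lemma ip_sum_left:
  assumes "finite (set_pmf \<nu>)"
  shows "ip (measure_pmf \<nu>) (\<lambda>z. \<Sum>k\<in>K. c k * f k z) g
       = (\<Sum>k\<in>K. c k * ip (measure_pmf \<nu>) (f k) g)"
  unfolding ip_def sum_distrib_right
  by (simp add: integral_sum integrable_measure_pmf_finite[OF assms] mult.assoc)

lemma is_onb_coeff:
  fixes q :: "nat \<Rightarrow> complex ^ 'd::finite \<Rightarrow> complex"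
  assumes "finite (set_pmf \<nu>)" "is_onb (measure_pmf \<nu>) n q" "l < dimP TYPE('d) n"
  shows "ip (measure_pmf \<nu>) (\<lambda>z. \<Sum>k<dimP TYPE('d) n. c k * q k z) (q l) = c l"
proof -
  have "ip (measure_pmf \<nu>) (\<lambda>z. \<Sum>k<dimP TYPE('d) n. c k * q k z) (q l)
      = (\<Sum>k<dimP TYPE('d) n. c k * ip (measure_pmf \<nu>) (q k) (q l))"
    using assms(1) by (rule ip_sum_left)
  also have "\<dots> = (\<Sum>k<dimP TYPE('d) n. if k = l then c k else 0)"
    using assms(2,3) by (intro sum.cong) (auto simp: is_onb_def)
  also have "\<dots> = c l"
    using assms(3) by simp
  finally show ?thesis .
qed

lemma is_onb_parseval:
  fixes q :: "nat \<Rightarrow> complex ^ 'd::finite \<Rightarrow> complex"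
  assumes "finite (set_pmf \<nu>)" "is_onb (measure_pmf \<nu>) n q" "p \<in> polys n"
  shows "ip (measure_pmf \<nu>) p p
       = complex_of_real (\<Sum>k<dimP TYPE('d) n. (cmod (ip (measure_pmf \<nu>) p (q k)))\<^sup>2)"
proof -
  obtain c where p: "p = (\<lambda>z. \<Sum>k<dimP TYPE('d) n. c k * q k z)"
    using assms(2,3) unfolding is_onb_def by blast
  have coeff: "ip (measure_pmf \<nu>) p (q k) = c k" if "k < dimP TYPE('d) n" for k
    unfolding p using assms(1,2) that by (rule is_onb_coeff)
  have "ip (measure_pmf \<nu>) p p = (\<Sum>k<dimP TYPE('d) n. c k * ip (measure_pmf \<nu>) (q k) p)"
    using assms(1) by (subst (1) p) (rule ip_sum_left)
  also have "\<dots> = (\<Sum>k<dimP TYPE('d) n. c k * cnj (c k))"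
    using coeff by (intro sum.cong) (auto simp: ip_commute[of _ "q _"])
  also have "\<dots> = complex_of_real (\<Sum>k<dimP TYPE('d) n. (cmod (c k))\<^sup>2)"
    by (simp add: of_real_sum complex_norm_square del: of_real_power)
  also have "\<dots> = complex_of_real (\<Sum>k<dimP TYPE('d) n. (cmod (ip (measure_pmf \<nu>) p (q k)))\<^sup>2)"
    using coeff by simp
  finally show ?thesis .
qed

locale lagrange_basis =
  fixes n :: nat
    and x :: "nat \<Rightarrow> complex ^ 'd::finite"
    and L :: "nat \<Rightarrow> complex ^ 'd \<Rightarrow> complex"
  assumes distinct: "inj_on x {..<dimP TYPE('d) n}"
    and unisolvent: "\<forall>y :: nat \<Rightarrow> complex. \<exists>!p. p \<in> polys n \<and>
                        (\<forall>i < dimP TYPE('d) n. p (x i) = y i)"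
    and lagrange_poly: "\<forall>i < dimP TYPE('d) n. L i \<in> polys n"
    and lagrange_delta: "\<forall>i < dimP TYPE('d) n. \<forall>j < dimP TYPE('d) n.
                            L i (x j) = (if i = j then 1 else 0)"
begin

lemma lagrange_combination_at_node:
  assumes "j < dimP TYPE('d) n"
  shows "(\<Sum>i<dimP TYPE('d) n. c i * L i (x j)) = c j"
proof -
  have "(\<Sum>i<dimP TYPE('d) n. c i * L i (x j)) = (\<Sum>i<dimP TYPE('d) n. if i = j then c i else 0)"
    using assms lagrange_delta by (intro sum.cong) auto
  also have "\<dots> = c j"
    using assms by simp
  finally show ?thesis .
qed

lemma lagrange_interpolation:
  assumes "p \<in> polys n"
  shows "p z = (\<Sum>i<dimP TYPE('d) n. p (x i) * L i z)"
proof -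
  let ?r = "\<lambda>z. \<Sum>i<dimP TYPE('d) n. p (x i) * L i z"
  have "?r \<in> polys n"
    using lagrange_poly by (intro polys_sum) auto
  moreover have "\<forall>j<dimP TYPE('d) n. ?r (x j) = p (x j)"
    by (simp add: lagrange_combination_at_node)
  moreover have "\<exists>!q. q \<in> polys n \<and> (\<forall>i<dimP TYPE('d) n. q (x i) = p (x i))"
    using unisolvent by (rule spec)
  ultimately have "?r = p"
    using assms by blast
  from fun_cong[OF this, of z] show ?thesis
    by (rule sym)
qed

lemma sum_lagrange_eq_1: "(\<Sum>i<dimP TYPE('d) n. L i z) = 1"
  using lagrange_interpolation[OF const_one_in_polys] by simp

lemma set_pmf_subset_nodes_iff:
  "set_pmf \<nu> \<subseteq> x ` {..<dimP TYPE('d) n} \<longleftrightarrow> (\<Sum>i<dimP TYPE('d) n. pmf \<nu> (x i)) = 1"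
  using distinct by (simp add: set_pmf_subset_iff_sum_pmf_eq_1 sum.reindex)

context
  fixes \<nu> :: "(complex ^ 'd) pmf"
  assumes supp: "set_pmf \<nu> \<subseteq> x ` {..<dimP TYPE('d) n}"
begin

lemma integral_on_nodes:
  "(LINT z|measure_pmf \<nu>. f z) = (\<Sum>i<dimP TYPE('d) n. pmf \<nu> (x i) * f (x i))"
  using integral_measure_pmf_inj_image[OF finite_lessThan distinct supp, of f] by simp

lemma ip_on_nodes:
  "ip (measure_pmf \<nu>) p q = (\<Sum>i<dimP TYPE('d) n. complex_of_real (pmf \<nu> (x i)) * p (x i) * cnj (q (x i)))"
  unfolding ip_def
  using integral_measure_pmf_inj_image[OF finite_lessThan distinct supp, of "\<lambda>z. p z * cnj (q z)"]
  by (simp add: scaleR_conv_of_real mult.assoc)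

lemma pmf_node_pos_if_nondegenerate:
  assumes "nondegenerate (measure_pmf \<nu>) n" "i < dimP TYPE('d) n"
  shows "pmf \<nu> (x i) > 0"
proof -
  have "L i (x i) = 1"
    using lagrange_delta assms(2) by simp
  then have "L i \<noteq> (\<lambda>_. 0)"
    by auto
  then have "0 < (LINT z|measure_pmf \<nu>. (cmod (L i z))\<^sup>2)"
    using assms lagrange_poly unfolding nondegenerate_def by blast
  also have "\<dots> = (\<Sum>j<dimP TYPE('d) n. pmf \<nu> (x j) * (cmod (L i (x j)))\<^sup>2)"
    by (rule integral_on_nodes)
  also have "\<dots> = (\<Sum>j<dimP TYPE('d) n. if j = i then pmf \<nu> (x i) else 0)"
    using lagrange_delta assms(2) by (intro sum.cong) auto
  also have "\<dots> = pmf \<nu> (x i)"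
    using assms(2) by simp
  finally show ?thesis .
qed

context
  assumes pos: "\<And>i. i < dimP TYPE('d) n \<Longrightarrow> pmf \<nu> (x i) > 0"
begin

lemma is_onb_scaled_lagrange:
  "is_onb (measure_pmf \<nu>) n (\<lambda>k z. L k z / complex_of_real (sqrt (pmf \<nu> (x k))))"
proof -
  define s where "s = (\<lambda>k. complex_of_real (sqrt (pmf \<nu> (x k))))"
  have s_sq: "s k * s k = complex_of_real (pmf \<nu> (x k))" and s_nz: "s k \<noteq> 0"
    and cnj_s: "cnj (s k) = s k" if "k < dimP TYPE('d) n" for k
    using pos[OF that] by (simp_all add: s_def flip: of_real_mult)
  have "(\<lambda>z. L k z / s k) \<in> polys n" if "k < dimP TYPE('d) n" for k
    using polys_scale[of "L k" n "1 / s k"] lagrange_poly that by simp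
  moreover have "ip (measure_pmf \<nu>) (\<lambda>z. L k z / s k) (\<lambda>z. L l z / s l) = (if k = l then 1 else 0)"
    if k: "k < dimP TYPE('d) n" and l: "l < dimP TYPE('d) n" for k l
  proof -
    have "ip (measure_pmf \<nu>) (\<lambda>z. L k z / s k) (\<lambda>z. L l z / s l)
        = (\<Sum>j<dimP TYPE('d) n. complex_of_real (pmf \<nu> (x j)) * (L k (x j) / s k) * cnj (L l (x j) / s l))"
      by (rule ip_on_nodes)
    also have "\<dots> = (\<Sum>j<dimP TYPE('d) n. if j = k then s k * s k / s k * cnj (L l (x k) / s l) else 0)"
      using lagrange_delta k s_sq[OF k] by (intro sum.cong) auto
    also have "\<dots> = (if k = l then 1 else 0)"
      using lagrange_delta k l s_nz[OF k] cnj_s[OF k] by auto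
    finally show ?thesis .
  qed
  moreover have "\<exists>c. p = (\<lambda>z. \<Sum>k<dimP TYPE('d) n. c k * (L k z / s k))" if "p \<in> polys n" for p
  proof (intro exI ext)
    fix z
    have "p z = (\<Sum>k<dimP TYPE('d) n. p (x k) * L k z)"
      using that by (rule lagrange_interpolation)
    also have "\<dots> = (\<Sum>k<dimP TYPE('d) n. (p (x k) * s k) * (L k z / s k))"
      using s_nz by (intro sum.cong) auto
    finally show "p z = (\<Sum>k<dimP TYPE('d) n. (p (x k) * s k) * (L k z / s k))" .
  qed
  ultimately show ?thesis
    unfolding is_onb_def s_def by blast
qed

lemma is_onb_sum_norm_sq:
  assumes onb: "is_onb (measure_pmf \<nu>) n q"
  shows "(\<Sum>k<dimP TYPE('d) n. (cmod (q k z))\<^sup>2)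
       = (\<Sum>i<dimP TYPE('d) n. (cmod (L i z))\<^sup>2 / pmf \<nu> (x i))"
proof -
  define v where "v = (\<lambda>i. complex_of_real (pmf \<nu> (x i)))"
  define K where "K = (\<lambda>w. \<Sum>i<dimP TYPE('d) n. cnj (L i z) / v i * L i w)"
  have v_nz: "v i \<noteq> 0" if "i < dimP TYPE('d) n" for i
    using pos[OF that] by (simp add: v_def)
  have K_poly: "K \<in> polys n"
    unfolding K_def using lagrange_poly by (intro polys_sum) auto
  have K_node: "K (x j) = cnj (L j z) / v j" if "j < dimP TYPE('d) n" for j
    unfolding K_def using that by (rule lagrange_combination_at_node)
  have "ip (measure_pmf \<nu>) K (q k) = cnj (q k z)" if k: "k < dimP TYPE('d) n" for k
  proof -
    have "ip (measure_pmf \<nu>) K (q k) = (\<Sum>j<dimP TYPE('d) n. v j * K (x j) * cnj (q k (x j)))"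
      unfolding v_def by (rule ip_on_nodes)
    also have "\<dots> = cnj (\<Sum>j<dimP TYPE('d) n. q k (x j) * L j z)"
      using K_node v_nz by (auto simp: mult.commute intro!: sum.cong)
    also have "\<dots> = cnj (q k z)"
      using onb k lagrange_interpolation[of "q k" z] by (simp add: is_onb_def)
    finally show ?thesis .
  qed
  then have "ip (measure_pmf \<nu>) K K = complex_of_real (\<Sum>k<dimP TYPE('d) n. (cmod (q k z))\<^sup>2)"
    using is_onb_parseval[OF finite_subset[OF supp finite_imageI[OF finite_lessThan]] onb K_poly]
    by simp
  moreover have "ip (measure_pmf \<nu>) K K
      = complex_of_real (\<Sum>i<dimP TYPE('d) n. (cmod (L i z))\<^sup>2 / pmf \<nu> (x i))"
    unfolding ip_on_nodes of_real_sum
    using K_node v_nz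
    by (intro sum.cong) (simp_all add: v_def complex_norm_square mult.commute del: of_real_power)
  ultimately show ?thesis
    by (metis of_real_eq_iff)
qed

lemma Kn_on_nodes:
  "Kn (measure_pmf \<nu>) n z = (\<Sum>i<dimP TYPE('d) n. (cmod (L i z))\<^sup>2 / pmf \<nu> (x i))"
proof -
  have "is_onb (measure_pmf \<nu>) n (SOME q. is_onb (measure_pmf \<nu>) n q)"
    using is_onb_scaled_lagrange by (rule someI[where P = "is_onb (measure_pmf \<nu>) n"])
  then show ?thesis
    unfolding Kn_def Let_def by (rule is_onb_sum_norm_sq)
qed

end

end

end

lemma sum_squared_le_sum_sq_divide:
  fixes a v :: "'i \<Rightarrow> real"
  assumes pos: "\<And>i. i \<in> I \<Longrightarrow> v i > 0" and one: "sum v I = 1"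
  shows "(sum a I)\<^sup>2 \<le> (\<Sum>i\<in>I. (a i)\<^sup>2 / v i)"
proof -
  let ?S = "sum a I"
  have "?S\<^sup>2 = (\<Sum>i\<in>I. 2 * ?S * a i - ?S\<^sup>2 * v i)"
    using one by (simp add: sum_subtractf sum_distrib_left[symmetric] power2_eq_square)
  also have "\<dots> \<le> (\<Sum>i\<in>I. (a i)\<^sup>2 / v i)"
  proof (rule sum_mono)
    fix i
    assume "i \<in> I"
    then have "v i > 0"
      by (rule pos)
    then have "(a i)\<^sup>2 / v i - (2 * ?S * a i - ?S\<^sup>2 * v i) = (a i - ?S * v i)\<^sup>2 / v i"
      by (simp add: field_simps power2_eq_square)
    also have "\<dots> \<ge> 0"
      using \<open>v i > 0\<close> by simp
    finally show "2 * ?S * a i - ?S\<^sup>2 * v i \<le> (a i)\<^sup>2 / v i"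
      by simp
  qed
  finally show ?thesis .
qed

lemma sum_sq_divide_proportional:
  fixes a v :: "'i \<Rightarrow> real"
  assumes proportional: "\<And>i. i \<in> I \<Longrightarrow> v i = a i / sum a I" and pos: "\<And>i. i \<in> I \<Longrightarrow> v i > 0"
  shows "(\<Sum>i\<in>I. (a i)\<^sup>2 / v i) = (sum a I)\<^sup>2"
proof -
  have "(a i)\<^sup>2 / v i = a i * sum a I" if "i \<in> I" for i
  proof -
    have "a i \<noteq> 0" "sum a I \<noteq> 0"
      using proportional[OF that] pos[OF that] by auto
    then show ?thesis
      using proportional[OF that] pos[OF that] by (simp add: power2_eq_square field_simps)
  qed
  then have "(\<Sum>i\<in>I. (a i)\<^sup>2 / v i) = (\<Sum>i\<in>I. a i * sum a I)"
    by (rule sum.cong[OF refl])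
  also have "\<dots> = (sum a I)\<^sup>2"
    by (simp add: sum_distrib_right power2_eq_square)
  finally show ?thesis .
qed

theorem mainTheorem1:
  fixes n :: nat
    and x :: "nat \<Rightarrow> complex ^ 'd::finite"
    and L :: "nat \<Rightarrow> complex ^ 'd \<Rightarrow> complex"
    and z0 :: "complex ^ 'd"
    and w :: "nat \<Rightarrow> real"
  assumes distinct: "inj_on x {..<dimP TYPE('d) n}"
    and unisolvent: "\<forall>y :: nat \<Rightarrow> complex. \<exists>!p. p \<in> polys n \<and>
                        (\<forall>i < dimP TYPE('d) n. p (x i) = y i)"
    and lagrange_poly: "\<forall>i < dimP TYPE('d) n. L i \<in> polys n"
    and lagrange_delta: "\<forall>i < dimP TYPE('d) n. \<forall>j < dimP TYPE('d) n.
                            L i (x j) = (if i = j then 1 else 0)"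
    and z0_notin: "z0 \<notin> x ` {..<dimP TYPE('d) n}"
    and w_def: "\<forall>i. w i = cmod (L i z0) / (\<Sum>j < dimP TYPE('d) n. cmod (L j z0))"
  shows "\<forall>\<mu> \<nu> :: (complex ^ 'd) pmf.
           (\<forall>i < dimP TYPE('d) n. pmf \<mu> (x i) = w i) \<longrightarrow>
           set_pmf \<nu> \<subseteq> x ` {..<dimP TYPE('d) n} \<longrightarrow>
           nondegenerate (measure_pmf \<mu>) n \<longrightarrow>
           nondegenerate (measure_pmf \<nu>) n \<longrightarrow>
           Kn (measure_pmf \<mu>) n z0 \<le> Kn (measure_pmf \<nu>) n z0"
proof (intro allI impI)
  fix \<mu> \<nu> :: "(complex ^ 'd) pmf"
  assume w_\<mu>: "\<forall>i < dimP TYPE('d) n. pmf \<mu> (x i) = w i"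
    and supp_\<nu>: "set_pmf \<nu> \<subseteq> x ` {..<dimP TYPE('d) n}"
    and nd_\<mu>: "nondegenerate (measure_pmf \<mu>) n"
    and nd_\<nu>: "nondegenerate (measure_pmf \<nu>) n"
  interpret lagrange_basis n x L
    using distinct unisolvent lagrange_poly lagrange_delta by unfold_locales
  define a where "a i = cmod (L i z0)" for i
  have "1 \<le> (\<Sum>i<dimP TYPE('d) n. a i)"
    using norm_sum[of "\<lambda>i. L i z0" "{..<dimP TYPE('d) n}"] by (simp add: a_def sum_lagrange_eq_1)
  then have "(\<Sum>i<dimP TYPE('d) n. pmf \<mu> (x i)) = 1"
    using w_\<mu> w_def by (simp add: a_def sum_divide_distrib[symmetric])
  then have supp_\<mu>: "set_pmf \<mu> \<subseteq> x ` {..<dimP TYPE('d) n}"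
    by (simp add: set_pmf_subset_nodes_iff)
  have pos_\<mu>: "pmf \<mu> (x i) > 0" and pos_\<nu>: "pmf \<nu> (x i) > 0" if "i < dimP TYPE('d) n" for i
    using pmf_node_pos_if_nondegenerate supp_\<mu> nd_\<mu> supp_\<nu> nd_\<nu> that by blast+
  have "Kn (measure_pmf \<mu>) n z0 = (\<Sum>i<dimP TYPE('d) n. (a i)\<^sup>2 / pmf \<mu> (x i))"
    unfolding a_def using supp_\<mu> pos_\<mu> by (rule Kn_on_nodes)
  also have "\<dots> = (\<Sum>i<dimP TYPE('d) n. a i)\<^sup>2"
    using w_\<mu> w_def pos_\<mu> by (intro sum_sq_divide_proportional) (auto simp: a_def)
  also have "\<dots> \<le> (\<Sum>i<dimP TYPE('d) n. (a i)\<^sup>2 / pmf \<nu> (x i))"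
    using supp_\<nu> pos_\<nu> by (intro sum_squared_le_sum_sq_divide) (auto simp: set_pmf_subset_nodes_iff)
  also have "\<dots> = Kn (measure_pmf \<nu>) n z0"
    unfolding a_def using supp_\<nu> pos_\<nu> by (rule Kn_on_nodes[symmetric])
  finally show "Kn (measure_pmf \<mu>) n z0 \<le> Kn (measure_pmf \<nu>) n z0" .
qed

end
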